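(* Let $\mathcal V$ be a finite set of nodes, $\mathcal P$ a finite set of labels, $\mathcal E$ a set of unordered pairs of nodes, $\theta_{ip}\in\mathbb R$, and $\theta_{ij,pq}\le0$ for all $\{i,j\}\in\mathcal E$, $p,q\in\mathcal P$. Let $w^m_{ip},c^m\in\mathbb R$ ($m=1,\dots,M$) and $v^k_{ip},d^k\in\mathbb R$ ($k=1,\dots,K$). For $\vec y\in\{0,1\}^{\mathcal V\times\mathcal P}$, $\vec\lambda\in\mathbb R^{\mathcal V}$, $\vec\xi\in\mathbb R^M$, $\vec\pi\in\mathbb R^K$ let $$L(\vec y,\vec\lambda,\vec\xi,\vec\pi)=E_I(\vec y)+\sum_{i}\lambda_i\Big(\sum_p y_{ip}-1\Big)+\sum_{m=1}^M\xi_m\Big(\sum_{i,p}w^m_{ip}y_{ip}-c^m\Big)+\sum_{k=1}^K\pi_k\Big(\sum_{i,p}v^k_{ip}y_{ip}-d^k\Big),$$ where $E_I(\vec y)=\sum_{i,p}\theta_{ip}y_{ip}+\sum_{\{i,j\}\in\mathcal E}\sum_{p,q}\theta_{ij,pq}y_{ip}y_{jq}$, and $D(\vec\lambda,\vec\xi,\vec\pi)=\min_{\vec y\in\{0,1\}^{\mathcal V\times\mathcal P}}L(\vec y,\vec\lambda,\vec\xi,\vec\pi)$. Then the maximum of $D(\vec\lambda,\vec\xi,\vec\pi)$ over $\vec\lambda\in\mathbb R^{\mathcal V}$, $\vec\xi\in\mathbb R^M$, $\vec\pi\in\mathbb R^K$ with $\pi_k\ge0$ for all $k$ equals the optimal value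 of the linear program $$\min_{\vec y}\ \sum_{i,p}\theta_{ip}y_{ip}+\sum_{\{i,j\}\in\mathcal E}\sum_{p,q}\theta_{ij,pq}y_{ij,pq}$$ subject to $y_{ip}\in[0,1]$; $y_{ij,pq}\in[0,1]$; $y_{ij,pq}\le y_{ip}$, $y_{ij,pq}\le y_{jq}$ for all $\{i,j\}\in\mathcal E$, $p,q\in\mathcal P$; $\sum_p y_{ip}=1$ for all $i\in\mathcal V$; $\sum_{i,p}w^m_{ip}y_{ip}=c^m$ for $m=1,\dots,M$; and $\sum_{i,p}v^k_{ip}y_{ip}\le d^k$ for $k=1,\dots,K$.
   Context: This is pairwise energy minimization $E(\vec x)=\sum_i\theta_i(x_i)+\sum_{\{i,j\}}\theta_{ij}(x_i,x_j)$ in indicator variables $y_{ip}=[x_i=p]$, subject additionally to global linear equality and inequality constraints on the indicators; all these constraints together with the consistency constraints are relaxed by Lagrange multipliers ($\vec\pi\ge0$ for inequalities). *)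

theory Defs
  imports "HOL-Analysis.Analysis"
begin

text \<open>Unordered edges {i,j} are represented as ordered pairs (i,j), each edge
  stored in exactly one orientation; theta2 i j p q is the pairwise cost of
  labelling i with p and j with q.\<close>

definition valid_edges :: "'v set \<Rightarrow> ('v \<times> 'v) set \<Rightarrow> bool" where
  "valid_edges V E \<longleftrightarrow> E \<subseteq> V \<times> V \<and> (\<forall>(i,j)\<in>E. i \<noteq> j \<and> (j,i) \<notin> E)"

definition energy_I ::
  "'v set \<Rightarrow> 'p set \<Rightarrow> ('v \<times> 'v) set \<Rightarrow> ('v \<Rightarrow> 'p \<Rightarrow> real)
   \<Rightarrow> ('v \<Rightarrow> 'v \<Rightarrow> 'p \<Rightarrow> 'p \<Rightarrow> real) \<Rightarrow> ('v \<Rightarrow> 'p \<Rightarrow> real) \<Rightarrow> real" where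
  "energy_I V P E theta1 theta2 y =
     (\<Sum>i\<in>V. \<Sum>p\<in>P. theta1 i p * y i p)
   + (\<Sum>(i,j)\<in>E. \<Sum>p\<in>P. \<Sum>q\<in>P. theta2 i j p q * y i p * y j q)"

definition lagrangian ::
  "'v set \<Rightarrow> 'p set \<Rightarrow> ('v \<times> 'v) set \<Rightarrow> ('v \<Rightarrow> 'p \<Rightarrow> real)
   \<Rightarrow> ('v \<Rightarrow> 'v \<Rightarrow> 'p \<Rightarrow> 'p \<Rightarrow> real)
   \<Rightarrow> nat \<Rightarrow> (nat \<Rightarrow> 'v \<Rightarrow> 'p \<Rightarrow> real) \<Rightarrow> (nat \<Rightarrow> real)
   \<Rightarrow> nat \<Rightarrow> (nat \<Rightarrow> 'v \<Rightarrow> 'p \<Rightarrow> real) \<Rightarrow> (nat \<Rightarrow> real)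
   \<Rightarrow> ('v \<Rightarrow> 'p \<Rightarrow> real) \<Rightarrow> ('v \<Rightarrow> real) \<Rightarrow> (nat \<Rightarrow> real) \<Rightarrow> (nat \<Rightarrow> real) \<Rightarrow> real" where
  "lagrangian V P E theta1 theta2 M w c K v d y lam xi mu =
     energy_I V P E theta1 theta2 y
   + (\<Sum>i\<in>V. lam i * ((\<Sum>p\<in>P. y i p) - 1))
   + (\<Sum>m\<in>{1..M}. xi m * ((\<Sum>i\<in>V. \<Sum>p\<in>P. w m i p * y i p) - c m))
   + (\<Sum>k\<in>{1..K}. mu k * ((\<Sum>i\<in>V. \<Sum>p\<in>P. v k i p * y i p) - d k))"

definition binary_labellings :: "'v set \<Rightarrow> 'p set \<Rightarrow> ('v \<Rightarrow> 'p \<Rightarrow> real) set" where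
  "binary_labellings V P =
     {y. (\<forall>i\<in>V. \<forall>p\<in>P. y i p \<in> {0,1}) \<and> (\<forall>i p. (i \<notin> V \<or> p \<notin> P) \<longrightarrow> y i p = 0)}"

definition dual_fun ::
  "'v set \<Rightarrow> 'p set \<Rightarrow> ('v \<times> 'v) set \<Rightarrow> ('v \<Rightarrow> 'p \<Rightarrow> real)
   \<Rightarrow> ('v \<Rightarrow> 'v \<Rightarrow> 'p \<Rightarrow> 'p \<Rightarrow> real)
   \<Rightarrow> nat \<Rightarrow> (nat \<Rightarrow> 'v \<Rightarrow> 'p \<Rightarrow> real) \<Rightarrow> (nat \<Rightarrow> real)
   \<Rightarrow> nat \<Rightarrow> (nat \<Rightarrow> 'v \<Rightarrow> 'p \<Rightarrow> real) \<Rightarrow> (nat \<Rightarrow> real)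
   \<Rightarrow> ('v \<Rightarrow> real) \<Rightarrow> (nat \<Rightarrow> real) \<Rightarrow> (nat \<Rightarrow> real) \<Rightarrow> real" where
  "dual_fun V P E theta1 theta2 M w c K v d lam xi mu =
     Min ((\<lambda>y. lagrangian V P E theta1 theta2 M w c K v d y lam xi mu) ` binary_labellings V P)"

definition lp_feasible ::
  "'v set \<Rightarrow> 'p set \<Rightarrow> ('v \<times> 'v) set
   \<Rightarrow> nat \<Rightarrow> (nat \<Rightarrow> 'v \<Rightarrow> 'p \<Rightarrow> real) \<Rightarrow> (nat \<Rightarrow> real)
   \<Rightarrow> nat \<Rightarrow> (nat \<Rightarrow> 'v \<Rightarrow> 'p \<Rightarrow> real) \<Rightarrow> (nat \<Rightarrow> real)
   \<Rightarrow> (('v \<Rightarrow> 'p \<Rightarrow> real) \<times> ('v \<Rightarrow> 'v \<Rightarrow> 'p \<Rightarrow> 'p \<Rightarrow> real)) set" where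
  "lp_feasible V P E M w c K v d =
     {(y1, y2).
        (\<forall>i\<in>V. \<forall>p\<in>P. 0 \<le> y1 i p \<and> y1 i p \<le> 1)
      \<and> (\<forall>(i,j)\<in>E. \<forall>p\<in>P. \<forall>q\<in>P. 0 \<le> y2 i j p q \<and> y2 i j p q \<le> 1
                  \<and> y2 i j p q \<le> y1 i p \<and> y2 i j p q \<le> y1 j q)
      \<and> (\<forall>i\<in>V. (\<Sum>p\<in>P. y1 i p) = 1)
      \<and> (\<forall>m\<in>{1..M}. (\<Sum>i\<in>V. \<Sum>p\<in>P. w m i p * y1 i p) = c m)
      \<and> (\<forall>k\<in>{1..K}. (\<Sum>i\<in>V. \<Sum>p\<in>P. v k i p * y1 i p) \<le> d k)}"

definition lp_objective ::
  "'v set \<Rightarrow> 'p set \<Rightarrow> ('v \<times> 'v) set \<Rightarrow> ('v \<Rightarrow> 'p \<Rightarrow> real)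
   \<Rightarrow> ('v \<Rightarrow> 'v \<Rightarrow> 'p \<Rightarrow> 'p \<Rightarrow> real)
   \<Rightarrow> ('v \<Rightarrow> 'p \<Rightarrow> real) \<Rightarrow> ('v \<Rightarrow> 'v \<Rightarrow> 'p \<Rightarrow> 'p \<Rightarrow> real) \<Rightarrow> real" where
  "lp_objective V P E theta1 theta2 y1 y2 =
     (\<Sum>i\<in>V. \<Sum>p\<in>P. theta1 i p * y1 i p)
   + (\<Sum>(i,j)\<in>E. \<Sum>p\<in>P. \<Sum>q\<in>P. theta2 i j p q * y2 i j p q)"

end

theory Submission
  imports Defs
begin

text \<open>The dual function D is the Lagrangian dual of an optimisation over the finitely many binary
  labellings, so by linear programming duality its supremum equals the least expected energy of a
  probability distribution on labellings that satisfies the constraints in expectation, and both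
  optima are attained when this set is nonempty. The first and second moments of such a
  distribution form a feasible point of the LP with the same objective. Conversely, when all
  pairwise costs are nonpositive, rounding an LP-feasible point at a uniformly distributed
  threshold shows that D never exceeds its objective (weak duality). Farkas' lemma, needed for the
  LP duality, is proved by Fourier--Motzkin elimination.\<close>

section \<open>Farkas' lemma\<close>

text \<open>One step of Fourier--Motzkin elimination of the variable j0 from a system of rows
  (a, b) meaning a \<bullet> x \<le> b: rows without j0 are kept, and every pair of rows with opposite signs
  at j0 is combined positively so that j0 cancels.\<close>

definition fm_eliminate :: "'j \<Rightarrow> (('j \<Rightarrow> real) \<times> real) set \<Rightarrow> (('j \<Rightarrow> real) \<times> real) set" where
  "fm_eliminate j0 C =
     {c \<in> C. fst c j0 = 0}
   \<union> (\<lambda>(p, n). (\<lambda>j. - fst n j0 * fst p j + fst p j0 * fst n j, - fst n j0 * snd p + fst p j0 * snd n))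
       ` ({c \<in> C. 0 < fst c j0} \<times> {c \<in> C. fst c j0 < 0})"

lemma finite_fm_eliminate: "finite C \<Longrightarrow> finite (fm_eliminate j0 C)"
  unfolding fm_eliminate_def by auto

lemma fm_eliminate_coeff: "c' \<in> fm_eliminate j0 C \<Longrightarrow> fst c' j0 = 0"
  unfolding fm_eliminate_def by auto

lemma fm_eliminate_nonneg_combination:
  assumes "finite C" and "c' \<in> fm_eliminate j0 C"
  shows "\<exists>z. (\<forall>c\<in>C. 0 \<le> z c) \<and> (\<forall>j. fst c' j = (\<Sum>c\<in>C. z c * fst c j))
             \<and> snd c' = (\<Sum>c\<in>C. z c * snd c)"
proof -
  consider "c' \<in> C" | p n where "p \<in> C" "0 < fst p j0" "n \<in> C" "fst n j0 < 0"
    "c' = (\<lambda>j. - fst n j0 * fst p j + fst p j0 * fst n j, - fst n j0 * snd p + fst p j0 * snd n)"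
    using assms(2) unfolding fm_eliminate_def by auto
  then show ?thesis
  proof cases
    case 1
    then show ?thesis using assms(1) by (intro exI[of _ "\<lambda>c. of_bool (c = c')"]) simp
  next
    case (2 p n)
    let ?z = "\<lambda>c. fst p j0 * of_bool (c = n) - fst n j0 * of_bool (c = p)"
    have "(\<Sum>c\<in>C. ?z c * g c) = - fst n j0 * g p + fst p j0 * g n" for g :: "_ \<Rightarrow> real"
    proof -
      have "(\<Sum>c\<in>C. ?z c * g c) = fst p j0 * (\<Sum>c\<in>C. of_bool (c = n) * g c)
          - fst n j0 * (\<Sum>c\<in>C. of_bool (c = p) * g c)"
        by (simp only: left_diff_distrib sum_subtractf sum_distrib_left mult.assoc)
      then show ?thesis using 2 assms(1) by simp
    qed
    then show ?thesis
      using 2 by (intro exI[of _ ?z]) auto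
  qed
qed

lemma fm_eliminate_solution_extends:
  fixes C :: "(('j \<Rightarrow> real) \<times> real) set"
  assumes "finite C" "finite J" "j0 \<notin> J"
    and sol: "\<forall>c\<in>fm_eliminate j0 C. (\<Sum>j\<in>J. fst c j * x' j) \<le> snd c"
  shows "\<exists>x. \<forall>c\<in>C. (\<Sum>j\<in>insert j0 J. fst c j * x j) \<le> snd c"
proof -
  define Pos where "Pos = {c\<in>C. 0 < fst c j0}"
  define Neg where "Neg = {c\<in>C. fst c j0 < 0}"
  define s where "s = (\<lambda>c::('j \<Rightarrow> real) \<times> real. \<Sum>j\<in>J. fst c j * x' j)"
  \<comment> \<open>row c is satisfied iff x j0 lies on the correct side of the bound u c\<close>
  define u where "u = (\<lambda>c::('j \<Rightarrow> real) \<times> real. (snd c - s c) / fst c j0)"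
  have fin: "finite Pos" "finite Neg" using assms(1) unfolding Pos_def Neg_def by auto
  have bounds: "u n \<le> u p" if "p \<in> Pos" "n \<in> Neg" for p n
  proof -
    have pn: "0 < fst p j0" "fst n j0 < 0" using that unfolding Pos_def Neg_def by auto
    let ?c = "(\<lambda>j. - fst n j0 * fst p j + fst p j0 * fst n j, - fst n j0 * snd p + fst p j0 * snd n)"
    have "?c \<in> fm_eliminate j0 C" using that unfolding fm_eliminate_def Pos_def Neg_def by force
    then have "(\<Sum>j\<in>J. fst ?c j * x' j) \<le> snd ?c" using sol by blast
    moreover have "(\<Sum>j\<in>J. fst ?c j * x' j) = - fst n j0 * s p + fst p j0 * s n"
      unfolding s_def by (simp add: algebra_simps sum.distrib sum_distrib_left sum_subtractf sum_negf)
    ultimately have "- fst n j0 * s p + fst p j0 * s n \<le> - fst n j0 * snd p + fst p j0 * snd n"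
      by simp
    then show ?thesis unfolding u_def using pn
      by (simp add: divide_simps) (smt (verit) mult.commute right_diff_distrib)
  qed
  obtain t where tPos: "\<And>p. p \<in> Pos \<Longrightarrow> t \<le> u p" and tNeg: "\<And>n. n \<in> Neg \<Longrightarrow> u n \<le> t"
  proof (cases "Pos = {}")
    case True
    show ?thesis by (rule that[of "Max (u ` Neg)"]) (use True fin in auto)
  next
    case False
    show ?thesis
      by (rule that[of "Min (u ` Pos)"]) (use False fin bounds in \<open>auto intro!: Min.boundedI\<close>)
  qed
  have "(\<Sum>j\<in>insert j0 J. fst c j * (x'(j0 := t)) j) \<le> snd c" if c: "c \<in> C" for c
  proof -
    have sum: "(\<Sum>j\<in>insert j0 J. fst c j * (x'(j0 := t)) j) = fst c j0 * t + s c"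
      using assms(2,3) unfolding s_def by (auto intro!: sum.cong)
    consider "fst c j0 = 0" | "0 < fst c j0" | "fst c j0 < 0" by linarith
    then show ?thesis
    proof cases
      case 1
      then have "c \<in> fm_eliminate j0 C" using c unfolding fm_eliminate_def by auto
      then show ?thesis using sol sum 1 unfolding s_def by auto
    next
      case 2
      then have "t \<le> u c" using tPos c unfolding Pos_def by auto
      then show ?thesis using 2 sum unfolding u_def by (simp add: le_divide_eq mult.commute)
    next
      case 3
      then have "u c \<le> t" using tNeg c unfolding Neg_def by auto
      then show ?thesis using 3 sum unfolding u_def by (simp add: neg_divide_le_eq mult.commute)
    qed
  qed
  then show ?thesis by blast
qed

lemma fm_eliminate_certificate_lifts:
  fixes C :: "(('j \<Rightarrow> real) \<times> real) set"
  assumes "finite C" and y': "\<forall>c'\<in>fm_eliminate j0 C. 0 \<le> y' c'"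
  shows "\<exists>y. (\<forall>c\<in>C. 0 \<le> y c)
           \<and> (\<forall>j. (\<Sum>c\<in>C. y c * fst c j) = (\<Sum>c'\<in>fm_eliminate j0 C. y' c' * fst c' j))
           \<and> (\<Sum>c\<in>C. y c * snd c) = (\<Sum>c'\<in>fm_eliminate j0 C. y' c' * snd c')"
proof -
  let ?C' = "fm_eliminate j0 C"
  have "\<forall>c'\<in>?C'. \<exists>z. (\<forall>c\<in>C. 0 \<le> z c)
      \<and> (\<forall>j. fst c' j = (\<Sum>c\<in>C. z c * fst c j)) \<and> snd c' = (\<Sum>c\<in>C. z c * snd c)"
    by (intro ballI fm_eliminate_nonneg_combination[OF assms(1)])
  then obtain z where z: "\<forall>c'\<in>?C'. (\<forall>c\<in>C. 0 \<le> z c' c)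
      \<and> (\<forall>j. fst c' j = (\<Sum>c\<in>C. z c' c * fst c j)) \<and> snd c' = (\<Sum>c\<in>C. z c' c * snd c)"
    by (rule bchoice[THEN exE]) blast
  then have z_nonneg: "\<And>c' c. c' \<in> ?C' \<Longrightarrow> c \<in> C \<Longrightarrow> 0 \<le> z c' c"
    and z_fst: "\<And>c' j. c' \<in> ?C' \<Longrightarrow> fst c' j = (\<Sum>c\<in>C. z c' c * fst c j)"
    and z_snd: "\<And>c'. c' \<in> ?C' \<Longrightarrow> snd c' = (\<Sum>c\<in>C. z c' c * snd c)"
    by blast+
  define y where "y = (\<lambda>c. \<Sum>c'\<in>?C'. y' c' * z c' c)"
  have combine: "(\<Sum>c\<in>C. y c * g c) = (\<Sum>c'\<in>?C'. y' c' * (\<Sum>c\<in>C. z c' c * g c))" for g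
    unfolding y_def by (simp add: sum_distrib_left sum_distrib_right sum.swap[of _ C] mult.assoc)
  show ?thesis
  proof (intro exI conjI ballI allI)
    show "0 \<le> y c" if "c \<in> C" for c
      unfolding y_def using that y' z_nonneg by (intro sum_nonneg mult_nonneg_nonneg) auto
    show "(\<Sum>c\<in>C. y c * fst c j) = (\<Sum>c'\<in>?C'. y' c' * fst c' j)" for j
      unfolding combine by (intro sum.cong) (simp_all add: z_fst[symmetric])
    show "(\<Sum>c\<in>C. y c * snd c) = (\<Sum>c'\<in>?C'. y' c' * snd c')"
      unfolding combine by (intro sum.cong) (simp_all add: z_snd[symmetric])
  qed
qed


lemma farkas_row_set:
  fixes C :: "(('j \<Rightarrow> real) \<times> real) set"
  assumes "finite J" "finite C"
    and "\<nexists>x. \<forall>c\<in>C. (\<Sum>j\<in>J. fst c j * x j) \<le> snd c"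
  shows "\<exists>y. (\<forall>c\<in>C. 0 \<le> y c) \<and> (\<forall>j\<in>J. (\<Sum>c\<in>C. y c * fst c j) = 0)
             \<and> (\<Sum>c\<in>C. y c * snd c) < 0"
  using assms
proof (induction J arbitrary: C rule: finite_induct)
  case empty
  then obtain c0 where c0: "c0 \<in> C" "snd c0 < 0" by force
  then show ?case
    using empty by (intro exI[of _ "\<lambda>c. of_bool (c = c0)"]) auto
next
  case (insert j0 J C)
  let ?C' = "fm_eliminate j0 C"
  have "\<nexists>x. \<forall>c\<in>?C'. (\<Sum>j\<in>J. fst c j * x j) \<le> snd c"
    using fm_eliminate_solution_extends[OF insert.prems(1) insert.hyps(1,2)] insert.prems(2) by blast
  then obtain y' where y': "\<forall>c\<in>?C'. 0 \<le> y' c" "\<forall>j\<in>J. (\<Sum>c\<in>?C'. y' c * fst c j) = 0"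
    "(\<Sum>c\<in>?C'. y' c * snd c) < 0"
    using insert.IH[OF finite_fm_eliminate[OF insert.prems(1)]] by blast
  moreover have "(\<Sum>c\<in>?C'. y' c * fst c j0) = 0"
    by (simp add: fm_eliminate_coeff)
  moreover obtain y where "\<forall>c\<in>C. 0 \<le> y c"
    "\<forall>j. (\<Sum>c\<in>C. y c * fst c j) = (\<Sum>c\<in>?C'. y' c * fst c j)"
    "(\<Sum>c\<in>C. y c * snd c) = (\<Sum>c\<in>?C'. y' c * snd c)"
    using fm_eliminate_certificate_lifts[OF insert.prems(1) y'(1)] by blast
  ultimately show ?case by (intro exI[of _ y]) auto
qed

lemma farkas:
  fixes I :: "'i set" and J :: "'j set" and A :: "'i \<Rightarrow> 'j \<Rightarrow> real" and b :: "'i \<Rightarrow> real"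
  assumes fI: "finite I" and fJ: "finite J"
    and nosol: "\<not> (\<exists>x. \<forall>i\<in>I. (\<Sum>j\<in>J. A i j * x j) \<le> b i)"
  shows "\<exists>y. (\<forall>i\<in>I. 0 \<le> y i) \<and> (\<forall>j\<in>J. (\<Sum>i\<in>I. y i * A i j) = 0) \<and> (\<Sum>i\<in>I. y i * b i) < 0"
proof -
  define h where "h = (\<lambda>i. (A i, b i))"
  have "\<not> (\<exists>x. \<forall>c\<in>h ` I. (\<Sum>j\<in>J. fst c j * x j) \<le> snd c)"
    using nosol unfolding h_def by auto
  from farkas_row_set[OF fJ finite_imageI[OF fI] this] obtain yc where
    yc: "\<forall>c\<in>h ` I. 0 \<le> yc c" "\<forall>j\<in>J. (\<Sum>c\<in>h ` I. yc c * fst c j) = 0" "(\<Sum>c\<in>h ` I. yc c * snd c) < 0"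
    by blast
  define cnt where "cnt = (\<lambda>c. real (card {i \<in> I. h i = c}))"
  define y where "y = (\<lambda>i. yc (h i) / cnt (h i))"
  have cntpos: "cnt c > 0" if "c \<in> h ` I" for c
    using that fI unfolding cnt_def by (auto simp: card_gt_0_iff)
  have regroup: "(\<Sum>i\<in>I. y i * g (h i)) = (\<Sum>c\<in>h ` I. yc c * g c)" for g :: "_ \<Rightarrow> real"
  proof -
    have "(\<Sum>i\<in>I. y i * g (h i)) = (\<Sum>c\<in>h ` I. \<Sum>i\<in>{i \<in> I. h i = c}. y i * g (h i))"
      using fI by (rule sum.image_gen)
    also have "\<dots> = (\<Sum>c\<in>h ` I. yc c * g c)"
    proof (rule sum.cong)
      fix c assume c: "c \<in> h ` I"
      have "(\<Sum>i\<in>{i \<in> I. h i = c}. y i * g (h i)) = (\<Sum>i\<in>{i \<in> I. h i = c}. yc c / cnt c * g c)"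
        unfolding y_def by (rule sum.cong) auto
      also have "\<dots> = cnt c * (yc c / cnt c * g c)" unfolding cnt_def by simp
      also have "\<dots> = yc c * g c" using cntpos[OF c] by simp
      finally show "(\<Sum>i\<in>{i \<in> I. h i = c}. y i * g (h i)) = yc c * g c" .
    qed simp
    finally show ?thesis .
  qed
  show ?thesis
  proof (intro exI conjI ballI)
    fix i assume "i \<in> I" then show "0 \<le> y i" unfolding y_def using yc(1) cntpos[of "h i"] by simp
  next
    fix j assume "j \<in> J"
    then show "(\<Sum>i\<in>I. y i * A i j) = 0" using regroup[of "\<lambda>c. fst c j"] yc(2) unfolding h_def by simp
  next
    show "(\<Sum>i\<in>I. y i * b i) < 0" using regroup[of "\<lambda>c. snd c"] yc(3) unfolding h_def by simp
  qed
qed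

lemma farkas_equalities:
  fixes I :: "'i set" and Ie :: "'e set" and J :: "'j set"
    and A :: "'i \<Rightarrow> 'j \<Rightarrow> real" and b :: "'i \<Rightarrow> real"
    and Ae :: "'e \<Rightarrow> 'j \<Rightarrow> real" and be :: "'e \<Rightarrow> real"
  assumes fI: "finite I" and fIe: "finite Ie" and fJ: "finite J"
    and nosol: "\<not> (\<exists>x. (\<forall>i\<in>I. (\<Sum>j\<in>J. A i j * x j) \<le> b i) \<and> (\<forall>i\<in>Ie. (\<Sum>j\<in>J. Ae i j * x j) = be i))"
  shows "\<exists>y ye. (\<forall>i\<in>I. 0 \<le> y i) \<and> (\<forall>j\<in>J. (\<Sum>i\<in>I. y i * A i j) + (\<Sum>i\<in>Ie. ye i * Ae i j) = 0)
          \<and> (\<Sum>i\<in>I. y i * b i) + (\<Sum>i\<in>Ie. ye i * be i) < 0"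
proof -
  define A' where "A' = (\<lambda>r j. case r of Inl i \<Rightarrow> A i j | Inr (i, s) \<Rightarrow> (if s then Ae i j else - Ae i j))"
  define b' where "b' = (\<lambda>r. case r of Inl i \<Rightarrow> b i | Inr (i, s) \<Rightarrow> (if s then be i else - be i))"
  define I' where "I' = I <+> (Ie \<times> (UNIV :: bool set))"
  have fI': "finite I'" unfolding I'_def using fI fIe by auto
  have sp: "(\<Sum>r\<in>I'. F r) = (\<Sum>i\<in>I. F (Inl i)) + (\<Sum>i\<in>Ie. F (Inr (i, True)) + F (Inr (i, False)))" for F :: "_ \<Rightarrow> real"
  proof -
    have "(\<Sum>r\<in>I'. F r) = (\<Sum>i\<in>I. F (Inl i)) + (\<Sum>p\<in>Ie \<times> (UNIV :: bool set). F (Inr p))"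
      unfolding I'_def using fI fIe by (simp add: sum.Plus comp_def)
    also have "(\<Sum>p\<in>Ie \<times> (UNIV :: bool set). F (Inr p)) = (\<Sum>i\<in>Ie. \<Sum>s\<in>(UNIV :: bool set). F (Inr (i, s)))"
      by (simp add: sum.cartesian_product)
    also have "\<dots> = (\<Sum>i\<in>Ie. F (Inr (i, True)) + F (Inr (i, False)))"
      by (simp add: UNIV_bool add.commute)
    finally show ?thesis .
  qed
  have "\<not> (\<exists>x. \<forall>r\<in>I'. (\<Sum>j\<in>J. A' r j * x j) \<le> b' r)"
  proof
    assume "\<exists>x. \<forall>r\<in>I'. (\<Sum>j\<in>J. A' r j * x j) \<le> b' r"
    then obtain x where x: "\<forall>r\<in>I'. (\<Sum>j\<in>J. A' r j * x j) \<le> b' r" by blast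
    have "(\<forall>i\<in>I. (\<Sum>j\<in>J. A i j * x j) \<le> b i) \<and> (\<forall>i\<in>Ie. (\<Sum>j\<in>J. Ae i j * x j) = be i)"
    proof (intro conjI ballI)
      fix i assume "i \<in> I" then have "Inl i \<in> I'" unfolding I'_def by auto
      from bspec[OF x this] show "(\<Sum>j\<in>J. A i j * x j) \<le> b i" by (simp add: A'_def b'_def)
    next
      fix i assume i: "i \<in> Ie"
      have "Inr (i, True) \<in> I'" "Inr (i, False) \<in> I'" using i unfolding I'_def by auto
      from bspec[OF x this(1)] have "(\<Sum>j\<in>J. Ae i j * x j) \<le> be i" by (simp add: A'_def b'_def)
      moreover from bspec[OF x \<open>Inr (i, False) \<in> I'\<close>] have "(\<Sum>j\<in>J. - Ae i j * x j) \<le> - be i"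
        by (simp add: A'_def b'_def)
      then have "- (\<Sum>j\<in>J. Ae i j * x j) \<le> - be i" by (simp add: sum_negf)
      ultimately show "(\<Sum>j\<in>J. Ae i j * x j) = be i" by linarith
    qed
    then show False using nosol by blast
  qed
  from farkas[OF fI' fJ this] obtain y' where
    y': "\<forall>r\<in>I'. 0 \<le> y' r" "\<forall>j\<in>J. (\<Sum>r\<in>I'. y' r * A' r j) = 0" "(\<Sum>r\<in>I'. y' r * b' r) < 0"
    by blast
  show ?thesis
  proof (intro exI conjI ballI)
    fix i assume "i \<in> I" then show "0 \<le> y' (Inl i)" using y'(1) unfolding I'_def by auto
  next
    fix j assume j: "j \<in> J"
    show "(\<Sum>i\<in>I. y' (Inl i) * A i j) + (\<Sum>i\<in>Ie. (y' (Inr (i, True)) - y' (Inr (i, False))) * Ae i j) = 0"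
      using y'(2) j unfolding sp by (simp add: A'_def algebra_simps)
  next
    show "(\<Sum>i\<in>I. y' (Inl i) * b i) + (\<Sum>i\<in>Ie. (y' (Inr (i, True)) - y' (Inr (i, False))) * be i) < 0"
      using y'(3) unfolding sp by (simp add: b'_def algebra_simps)
  qed
qed

section \<open>Linear programming duality\<close>

lemma sum_mult_sum_swap:
  "(\<Sum>i\<in>I. u i * (\<Sum>j\<in>J. A i j * x j)) = (\<Sum>j\<in>J. (\<Sum>i\<in>I. u i * A i j) * (x j :: real))"
  by (simp add: sum_distrib_left sum_distrib_right sum.swap[of _ J] mult_ac)

lemma lp_weak_duality:
  assumes "\<forall>i\<in>I. (\<Sum>j\<in>J. A i j * x j) \<le> b i"
    and "\<forall>i\<in>I. 0 \<le> y i" and "\<forall>j\<in>J. (\<Sum>i\<in>I. y i * A i j) = c j"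
  shows "(\<Sum>j\<in>J. c j * x j) \<le> (\<Sum>i\<in>I. y i * (b i :: real))"
proof -
  have "(\<Sum>j\<in>J. c j * x j) = (\<Sum>i\<in>I. y i * (\<Sum>j\<in>J. A i j * x j))"
    using assms(3) by (simp add: sum_mult_sum_swap)
  also have "\<dots> \<le> (\<Sum>i\<in>I. y i * b i)"
    using assms(1,2) by (intro sum_mono mult_left_mono) auto
  finally show ?thesis .
qed

lemma lp_unbounded_if_dual_infeasible:
  fixes A :: "'i \<Rightarrow> 'j \<Rightarrow> real"
  assumes "finite I" "finite J"
    and x0: "\<forall>i\<in>I. (\<Sum>j\<in>J. A i j * x0 j) \<le> b i"
    and "\<nexists>y. (\<forall>i\<in>I. 0 \<le> y i) \<and> (\<forall>j\<in>J. (\<Sum>i\<in>I. y i * A i j) = c j)"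
  shows "\<exists>x. (\<forall>i\<in>I. (\<Sum>j\<in>J. A i j * x j) \<le> b i) \<and> \<gamma> \<le> (\<Sum>j\<in>J. c j * x j)"
proof -
  have "\<nexists>y. (\<forall>i\<in>I. (\<Sum>i'\<in>I. - of_bool (i = i') * y i') \<le> 0)
         \<and> (\<forall>j\<in>J. (\<Sum>i\<in>I. A i j * y i) = c j)"
    using assms(1,4) by (simp add: sum_negf mult.commute[of "A _ _"])
  from farkas_equalities[of I J I "\<lambda>i i'. - of_bool (i = i')" "\<lambda>_. 0" "\<lambda>j i. A i j" c, OF assms(1,2,1) this]
  obtain p w where
    p: "\<forall>i\<in>I. 0 \<le> p i"
    and col: "\<forall>i'\<in>I. (\<Sum>i\<in>I. p i * - of_bool (i = i')) + (\<Sum>j\<in>J. w j * A i' j) = 0"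
    and rhs: "(\<Sum>i\<in>I. p i * 0) + (\<Sum>j\<in>J. w j * c j) < 0"
    by blast
  define d where "d = (\<lambda>j. - w j)"
  \<comment> \<open>d is a recession direction of the feasible region along which the objective increases\<close>
  have dir: "(\<Sum>j\<in>J. A i j * d j) \<le> 0" if "i \<in> I" for i
  proof -
    have "(\<Sum>j\<in>J. w j * A i j) = p i"
      using bspec[OF col that] assms(1) that by (simp add: sum_negf)
    then show ?thesis using p that unfolding d_def by (simp add: sum_negf mult.commute)
  qed
  have slope: "0 < (\<Sum>j\<in>J. c j * d j)" using rhs unfolding d_def by (simp add: sum_negf mult.commute)
  define s where "s = max 0 ((\<gamma> - (\<Sum>j\<in>J. c j * x0 j)) / (\<Sum>j\<in>J. c j * d j))"
  have along: "(\<Sum>j\<in>J. a j * (x0 j + s * d j)) = (\<Sum>j\<in>J. a j * x0 j) + s * (\<Sum>j\<in>J. a j * d j)" for a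
    by (simp add: distrib_left sum.distrib sum_distrib_left mult.left_commute)
  show ?thesis
  proof (intro exI conjI ballI)
    show "(\<Sum>j\<in>J. A i j * (x0 j + s * d j)) \<le> b i" if "i \<in> I" for i
    proof -
      have "s * (\<Sum>j\<in>J. A i j * d j) \<le> 0"
        using dir[OF that] by (simp add: s_def mult_nonneg_nonpos)
      then show ?thesis unfolding along using x0 that by fastforce
    qed
    have "(\<gamma> - (\<Sum>j\<in>J. c j * x0 j)) / (\<Sum>j\<in>J. c j * d j) * (\<Sum>j\<in>J. c j * d j)
        \<le> s * (\<Sum>j\<in>J. c j * d j)"
      using slope unfolding s_def by (intro mult_right_mono) auto
    then have "\<gamma> - (\<Sum>j\<in>J. c j * x0 j) \<le> s * (\<Sum>j\<in>J. c j * d j)"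
      using slope by simp
    then show "\<gamma> \<le> (\<Sum>j\<in>J. c j * (x0 j + s * d j))"
      unfolding along by simp
  qed
qed

lemma lp_strong_duality:
  fixes A :: "'i \<Rightarrow> 'j \<Rightarrow> real"
  assumes fin: "finite I" "finite J"
    and x0: "\<forall>i\<in>I. (\<Sum>j\<in>J. A i j * x0 j) \<le> b i"
    and y0: "\<forall>i\<in>I. 0 \<le> y0 i" "\<forall>j\<in>J. (\<Sum>i\<in>I. y0 i * A i j) = c j"
  shows "\<exists>x y. (\<forall>i\<in>I. (\<Sum>j\<in>J. A i j * x j) \<le> b i)
           \<and> (\<forall>i\<in>I. 0 \<le> y i) \<and> (\<forall>j\<in>J. (\<Sum>i\<in>I. y i * A i j) = c j)
           \<and> (\<Sum>j\<in>J. c j * x j) = (\<Sum>i\<in>I. y i * b i)"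
proof (rule ccontr)
  assume no_opt: "\<not> ?thesis"
  \<comment> \<open>primal feasibility, dual feasibility and reversed weak duality as one system in the
     joint variables (x, y)\<close>
  define A' :: "'i + 'i + unit \<Rightarrow> 'j + 'i \<Rightarrow> real" where
    "A' = (\<lambda>r z. case r of
        Inl i \<Rightarrow> (case z of Inl j \<Rightarrow> A i j | Inr _ \<Rightarrow> 0)
      | Inr (Inl i) \<Rightarrow> (case z of Inl _ \<Rightarrow> 0 | Inr i' \<Rightarrow> - of_bool (i = i'))
      | Inr (Inr _) \<Rightarrow> (case z of Inl j \<Rightarrow> - c j | Inr i \<Rightarrow> b i))"
  define b' :: "'i + 'i + unit \<Rightarrow> real" where "b' = (\<lambda>r. case r of Inl i \<Rightarrow> b i | Inr _ \<Rightarrow> 0)"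
  define Ae :: "'j \<Rightarrow> 'j + 'i \<Rightarrow> real" where "Ae = (\<lambda>j z. case z of Inl _ \<Rightarrow> 0 | Inr i \<Rightarrow> A i j)"
  have sum_vars: "(\<Sum>z\<in>J <+> I. F z) = (\<Sum>j\<in>J. F (Inl j)) + (\<Sum>i\<in>I. F (Inr i))" for F :: "_ \<Rightarrow> real"
    using fin by (simp add: sum.Plus)
  have sum_rows: "(\<Sum>r\<in>I <+> I <+> {()}. F r)
      = (\<Sum>i\<in>I. F (Inl i)) + (\<Sum>i\<in>I. F (Inr (Inl i))) + F (Inr (Inr ()))" for F :: "_ \<Rightarrow> real"
    using fin by (simp add: sum.Plus)
  have "\<nexists>z. (\<forall>r\<in>I <+> I <+> {()}. (\<Sum>z'\<in>J <+> I. A' r z' * z z') \<le> b' r)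
         \<and> (\<forall>j\<in>J. (\<Sum>z'\<in>J <+> I. Ae j z' * z z') = c j)"
  proof
    assume "\<exists>z. (\<forall>r\<in>I <+> I <+> {()}. (\<Sum>z'\<in>J <+> I. A' r z' * z z') \<le> b' r)
         \<and> (\<forall>j\<in>J. (\<Sum>z'\<in>J <+> I. Ae j z' * z z') = c j)"
    then obtain z where rows: "\<And>r. r \<in> I <+> I <+> {()} \<Longrightarrow> (\<Sum>z'\<in>J <+> I. A' r z' * z z') \<le> b' r"
      and eqs: "\<And>j. j \<in> J \<Longrightarrow> (\<Sum>z'\<in>J <+> I. Ae j z' * z z') = c j"
      by blast
    define x where "x = (\<lambda>j. z (Inl j))"
    define y where "y = (\<lambda>i. z (Inr i))"
    have primal: "\<forall>i\<in>I. (\<Sum>j\<in>J. A i j * x j) \<le> b i"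
    proof
      fix i assume "i \<in> I"
      from rows[OF InlI[OF this]] show "(\<Sum>j\<in>J. A i j * x j) \<le> b i"
        by (simp add: sum_vars A'_def b'_def x_def)
    qed
    have nonneg: "\<forall>i\<in>I. 0 \<le> y i"
    proof
      fix i assume "i \<in> I"
      from rows[OF InrI[OF InlI[OF this]]] fin \<open>i \<in> I\<close> show "0 \<le> y i"
        by (simp add: sum_vars A'_def b'_def y_def sum_negf)
    qed
    have dual: "\<forall>j\<in>J. (\<Sum>i\<in>I. y i * A i j) = c j"
      using eqs by (simp add: sum_vars Ae_def y_def mult.commute)
    have "(\<Sum>i\<in>I. y i * b i) \<le> (\<Sum>j\<in>J. c j * x j)"
      using rows[OF InrI[OF InrI]] by (simp add: sum_vars A'_def b'_def x_def y_def sum_negf mult.commute)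
    then show False
      using no_opt primal nonneg dual lp_weak_duality[OF primal nonneg dual] by force
  qed
  from farkas_equalities[OF _ fin(2) _ this] fin obtain p w where
    p: "\<forall>r\<in>I <+> I <+> {()}. 0 \<le> p r"
    and col: "\<forall>z\<in>J <+> I. (\<Sum>r\<in>I <+> I <+> {()}. p r * A' r z) + (\<Sum>j\<in>J. w j * Ae j z) = 0"
    and rhs: "(\<Sum>r\<in>I <+> I <+> {()}. p r * b' r) + (\<Sum>j\<in>J. w j * c j) < 0"
    by auto
  define u where "u = (\<lambda>i. p (Inl i))"
  define q where "q = (\<lambda>i. p (Inr (Inl i)))"
  define s where "s = p (Inr (Inr ()))"
  have u: "\<forall>i\<in>I. 0 \<le> u i" and q: "\<forall>i\<in>I. 0 \<le> q i" and s: "0 \<le> s"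
    using p unfolding u_def q_def s_def by auto
  have col_x: "(\<Sum>i\<in>I. u i * A i j) = s * c j" if "j \<in> J" for j
    using bspec[OF col InlI[OF that]] by (simp add: sum_rows A'_def Ae_def u_def s_def)
  have col_y: "(\<Sum>j\<in>J. A i j * w j) = q i - s * b i" if "i \<in> I" for i
    using bspec[OF col InrI[OF that]] fin that
    by (simp add: sum_rows A'_def Ae_def q_def s_def sum_negf mult.commute)
  have rhs': "(\<Sum>i\<in>I. u i * b i) + (\<Sum>j\<in>J. c j * w j) < 0"
    using rhs by (simp add: sum_rows b'_def u_def mult.commute)
  show False
  proof (cases "s = 0")
    case True
    have "0 = (\<Sum>j\<in>J. (\<Sum>i\<in>I. u i * A i j) * x0 j)" using col_x True by simp
    also have "\<dots> \<le> (\<Sum>i\<in>I. u i * b i)"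
      unfolding sum_mult_sum_swap[symmetric] using x0 u by (intro sum_mono mult_left_mono) auto
    finally have "0 \<le> (\<Sum>i\<in>I. u i * b i)" .
    moreover have "(\<Sum>j\<in>J. c j * w j) = (\<Sum>i\<in>I. y0 i * q i)"
    proof -
      have "(\<Sum>j\<in>J. c j * w j) = (\<Sum>j\<in>J. (\<Sum>i\<in>I. y0 i * A i j) * w j)"
        using y0(2) by simp
      also have "\<dots> = (\<Sum>i\<in>I. y0 i * q i)"
        unfolding sum_mult_sum_swap[symmetric] using col_y True by simp
      finally show ?thesis .
    qed
    moreover have "0 \<le> (\<Sum>i\<in>I. y0 i * q i)" using y0(1) q by (intro sum_nonneg) auto
    ultimately show False using rhs' by linarith
  next
    case False
    then have "0 < s" using s by simp
    \<comment> \<open>rescaling the certificate gives a primal and a dual solution violating weak duality\<close>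
    define x where "x = (\<lambda>j. - w j / s)"
    define y where "y = (\<lambda>i. u i / s)"
    have primal: "\<forall>i\<in>I. (\<Sum>j\<in>J. A i j * x j) \<le> b i"
    proof
      fix i assume "i \<in> I"
      have "(\<Sum>j\<in>J. A i j * x j) = - (\<Sum>j\<in>J. A i j * w j) / s"
        unfolding x_def by (simp add: sum_divide_distrib[symmetric] sum_negf)
      then show "(\<Sum>j\<in>J. A i j * x j) \<le> b i"
        using col_y[OF \<open>i \<in> I\<close>] q \<open>i \<in> I\<close> \<open>0 < s\<close> by (simp add: divide_le_eq)
    qed
    have nonneg: "\<forall>i\<in>I. 0 \<le> y i" using u \<open>0 < s\<close> unfolding y_def by simp
    have dual: "\<forall>j\<in>J. (\<Sum>i\<in>I. y i * A i j) = c j"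
      using col_x \<open>0 < s\<close> unfolding y_def by (simp add: sum_divide_distrib[symmetric])
    have "(\<Sum>j\<in>J. c j * x j) \<le> (\<Sum>i\<in>I. y i * b i)"
      by (rule lp_weak_duality[OF primal nonneg dual])
    then have "- (\<Sum>j\<in>J. c j * w j) / s \<le> (\<Sum>i\<in>I. u i * b i) / s"
      unfolding x_def y_def by (simp add: sum_divide_distrib[symmetric] sum_negf)
    then show False using rhs' \<open>0 < s\<close> by (simp add: divide_simps)
  qed
qed

section \<open>Lagrangian duality over a finite set\<close>

definition finite_lagrangian ::
  "'e set \<Rightarrow> 'k set \<Rightarrow> ('y \<Rightarrow> real) \<Rightarrow> ('e \<Rightarrow> 'y \<Rightarrow> real) \<Rightarrow> ('k \<Rightarrow> 'y \<Rightarrow> real)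
   \<Rightarrow> ('e \<Rightarrow> real) \<Rightarrow> ('k \<Rightarrow> real) \<Rightarrow> 'y \<Rightarrow> real" where
  "finite_lagrangian Eq Ineq f G H lam mu y =
     f y + (\<Sum>e\<in>Eq. lam e * G e y) + (\<Sum>k\<in>Ineq. mu k * H k y)"

definition mixed_feasible ::
  "'y set \<Rightarrow> 'e set \<Rightarrow> 'k set \<Rightarrow> ('e \<Rightarrow> 'y \<Rightarrow> real) \<Rightarrow> ('k \<Rightarrow> 'y \<Rightarrow> real) \<Rightarrow> ('y \<Rightarrow> real) \<Rightarrow> bool" where
  "mixed_feasible Y Eq Ineq G H \<alpha> \<longleftrightarrow>
     (\<forall>y\<in>Y. 0 \<le> \<alpha> y) \<and> sum \<alpha> Y = 1
   \<and> (\<forall>e\<in>Eq. (\<Sum>y\<in>Y. \<alpha> y * G e y) = 0) \<and> (\<forall>k\<in>Ineq. (\<Sum>y\<in>Y. \<alpha> y * H k y) \<le> 0)"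

lemma ball_Plus_iff: "(\<forall>r\<in>A <+> B. P r) \<longleftrightarrow> (\<forall>a\<in>A. P (Inl a)) \<and> (\<forall>b\<in>B. P (Inr b))"
  by auto

text \<open>The Lagrangian dual as a linear program: maximise t subject to t \<le> L(lam, mu, y) for every
  y \<in> Y and mu \<ge> 0. Its variables are indexed by Inl () for t, Inr (Inl e) for lam e and
  Inr (Inr k) for mu k; its rows by Inl y for the bound at y and Inr k for the sign of mu k.\<close>

fun lagrangian_lp_matrix ::
  "('e \<Rightarrow> 'y \<Rightarrow> real) \<Rightarrow> ('k \<Rightarrow> 'y \<Rightarrow> real) \<Rightarrow> 'y + 'k \<Rightarrow> unit + 'e + 'k \<Rightarrow> real" where
  "lagrangian_lp_matrix G H (Inl y) (Inl _) = 1"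
| "lagrangian_lp_matrix G H (Inl y) (Inr (Inl e)) = - G e y"
| "lagrangian_lp_matrix G H (Inl y) (Inr (Inr k)) = - H k y"
| "lagrangian_lp_matrix G H (Inr k) (Inr (Inr k')) = - of_bool (k = k')"
| "lagrangian_lp_matrix G H (Inr k) _ = 0"

fun lagrangian_lp_rhs :: "('y \<Rightarrow> real) \<Rightarrow> 'y + 'k \<Rightarrow> real" where
  "lagrangian_lp_rhs f (Inl y) = f y"
| "lagrangian_lp_rhs f (Inr k) = 0"

fun lagrangian_lp_cost :: "unit + 'e + 'k \<Rightarrow> real" where
  "lagrangian_lp_cost (Inl _) = 1"
| "lagrangian_lp_cost (Inr _) = 0"

lemma sum_lagrangian_lp_vars:
  assumes "finite Eq" "finite Ineq"
  shows "(\<Sum>v\<in>{()} <+> Eq <+> Ineq. F v)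
       = F (Inl ()) + (\<Sum>e\<in>Eq. F (Inr (Inl e))) + (\<Sum>k\<in>Ineq. F (Inr (Inr k)))"
  using assms by (simp add: sum.Plus add.assoc)

lemma lagrangian_lp_cost_sum:
  assumes "finite Eq" "finite Ineq"
  shows "(\<Sum>v\<in>{()} <+> Eq <+> Ineq. lagrangian_lp_cost v * x v) = x (Inl ())"
  using assms by (simp add: sum_lagrangian_lp_vars)

lemma lagrangian_lp_feasible_iff:
  assumes "finite Eq" "finite Ineq"
  shows "(\<forall>r\<in>Y <+> Ineq. (\<Sum>v\<in>{()} <+> Eq <+> Ineq. lagrangian_lp_matrix G H r v * x v)
            \<le> lagrangian_lp_rhs f r)
     \<longleftrightarrow> (\<forall>k\<in>Ineq. 0 \<le> x (Inr (Inr k)))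
       \<and> (\<forall>y\<in>Y. x (Inl ()) \<le> finite_lagrangian Eq Ineq f G H (\<lambda>e. x (Inr (Inl e))) (\<lambda>k. x (Inr (Inr k))) y)"
  using assms
  unfolding ball_Plus_iff
  by (auto simp: sum_lagrangian_lp_vars finite_lagrangian_def sum_negf mult.commute)

lemma sum_lagrangian_lp_rows:
  assumes "finite Y" "finite Ineq"
  shows "(\<Sum>r\<in>Y <+> Ineq. F r) = (\<Sum>y\<in>Y. F (Inl y)) + (\<Sum>k\<in>Ineq. F (Inr k))"
  using assms by (simp add: sum.Plus)

lemma lagrangian_lp_rhs_sum:
  assumes "finite Y" "finite Ineq"
  shows "(\<Sum>r\<in>Y <+> Ineq. u r * lagrangian_lp_rhs f r) = (\<Sum>y\<in>Y. u (Inl y) * f y)"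
  using assms by (simp add: sum_lagrangian_lp_rows)

lemma lagrangian_lp_dual_feasible_iff:
  assumes "finite Y" "finite Eq" "finite Ineq"
  shows "(\<forall>r\<in>Y <+> Ineq. 0 \<le> u r)
       \<and> (\<forall>v\<in>{()} <+> Eq <+> Ineq.
            (\<Sum>r\<in>Y <+> Ineq. u r * lagrangian_lp_matrix G H r v) = lagrangian_lp_cost v)
     \<longleftrightarrow> mixed_feasible Y Eq Ineq G H (\<lambda>y. u (Inl y))
       \<and> (\<forall>k\<in>Ineq. u (Inr k) = - (\<Sum>y\<in>Y. u (Inl y) * H k y))"
  using assms unfolding ball_Plus_iff mixed_feasible_def
  by (auto simp: sum_lagrangian_lp_rows sum_negf) (metis neg_0_le_iff_le)

lemma lagrangian_lp_feasible_exists: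
  assumes "finite Y" "finite Eq" "finite Ineq"
  shows "\<exists>x. \<forall>r\<in>Y <+> Ineq.
           (\<Sum>v\<in>{()} <+> Eq <+> Ineq. lagrangian_lp_matrix G H r v * x v) \<le> lagrangian_lp_rhs f r"
proof -
  let ?x = "case_sum (\<lambda>_. - (\<Sum>y\<in>Y. \<bar>f y\<bar>)) (\<lambda>_. 0)"
  have "- (\<Sum>y'\<in>Y. \<bar>f y'\<bar>) \<le> f y" if "y \<in> Y" for y
    using member_le_sum[OF that, of "\<lambda>y. \<bar>f y\<bar>"] assms(1) by simp
  then show ?thesis
    using assms(2,3) by (intro exI[of _ ?x]) (simp add: lagrangian_lp_feasible_iff finite_lagrangian_def)
qed

lemma lagrangian_dual_unbounded:
  assumes "finite Y" "finite Eq" "finite Ineq"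
    and "\<nexists>\<alpha>. mixed_feasible Y Eq Ineq G H \<alpha>"
  shows "\<exists>lam mu. (\<forall>k\<in>Ineq. 0 \<le> mu k) \<and> (\<forall>y\<in>Y. \<gamma> \<le> finite_lagrangian Eq Ineq f G H lam mu y)"
proof -
  have fin: "finite (Y <+> Ineq)" "finite ({()} <+> Eq <+> Ineq)" using assms(1-3) by auto
  obtain x0 where "\<forall>r\<in>Y <+> Ineq.
      (\<Sum>v\<in>{()} <+> Eq <+> Ineq. lagrangian_lp_matrix G H r v * x0 v) \<le> lagrangian_lp_rhs f r"
    using lagrangian_lp_feasible_exists[OF assms(1-3)] by blast
  moreover have "\<nexists>u. (\<forall>r\<in>Y <+> Ineq. 0 \<le> u r) \<and> (\<forall>v\<in>{()} <+> Eq <+> Ineq.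
      (\<Sum>r\<in>Y <+> Ineq. u r * lagrangian_lp_matrix G H r v) = lagrangian_lp_cost v)"
    using assms(4) lagrangian_lp_dual_feasible_iff[OF assms(1-3)] by blast
  ultimately obtain x where x: "\<forall>r\<in>Y <+> Ineq.
      (\<Sum>v\<in>{()} <+> Eq <+> Ineq. lagrangian_lp_matrix G H r v * x v) \<le> lagrangian_lp_rhs f r"
    and "\<gamma> \<le> (\<Sum>v\<in>{()} <+> Eq <+> Ineq. lagrangian_lp_cost v * x v)"
    using lp_unbounded_if_dual_infeasible[OF fin] by blast
  then have "\<gamma> \<le> x (Inl ())" by (simp add: lagrangian_lp_cost_sum[OF assms(2,3)])
  moreover have "(\<forall>k\<in>Ineq. 0 \<le> x (Inr (Inr k)))
      \<and> (\<forall>y\<in>Y. x (Inl ()) \<le> finite_lagrangian Eq Ineq f G H (\<lambda>e. x (Inr (Inl e))) (\<lambda>k. x (Inr (Inr k))) y)"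
    using x unfolding lagrangian_lp_feasible_iff[OF assms(2,3)] .
  ultimately show ?thesis
    by (intro exI[of _ "\<lambda>e. x (Inr (Inl e))"] exI[of _ "\<lambda>k. x (Inr (Inr k))"]) fastforce
qed

lemma lagrangian_strong_duality:
  assumes "finite Y" "finite Eq" "finite Ineq"
    and "mixed_feasible Y Eq Ineq G H \<alpha>0"
  shows "\<exists>lam mu \<alpha>. (\<forall>k\<in>Ineq. 0 \<le> mu k) \<and> mixed_feasible Y Eq Ineq G H \<alpha>
           \<and> (\<forall>y\<in>Y. (\<Sum>y'\<in>Y. \<alpha> y' * f y') \<le> finite_lagrangian Eq Ineq f G H lam mu y)"
proof -
  have fin: "finite (Y <+> Ineq)" "finite ({()} <+> Eq <+> Ineq)" using assms(1-3) by auto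
  note feasible_iff = lagrangian_lp_feasible_iff[OF assms(2,3), of Y G H _ f]
  note dual_feasible_iff = lagrangian_lp_dual_feasible_iff[OF assms(1-3), of _ G H]
  obtain x0 where x0: "\<forall>r\<in>Y <+> Ineq.
      (\<Sum>v\<in>{()} <+> Eq <+> Ineq. lagrangian_lp_matrix G H r v * x0 v) \<le> lagrangian_lp_rhs f r"
    using lagrangian_lp_feasible_exists[OF assms(1-3)] by blast
  define u0 where "u0 = case_sum \<alpha>0 (\<lambda>k. - (\<Sum>y\<in>Y. \<alpha>0 y * H k y))"
  have u0: "(\<forall>r\<in>Y <+> Ineq. 0 \<le> u0 r) \<and> (\<forall>v\<in>{()} <+> Eq <+> Ineq.
      (\<Sum>r\<in>Y <+> Ineq. u0 r * lagrangian_lp_matrix G H r v) = lagrangian_lp_cost v)"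
    unfolding dual_feasible_iff using assms(4) by (simp add: u0_def)
  obtain x u where
    x: "\<forall>r\<in>Y <+> Ineq.
      (\<Sum>v\<in>{()} <+> Eq <+> Ineq. lagrangian_lp_matrix G H r v * x v) \<le> lagrangian_lp_rhs f r"
    and u: "(\<forall>r\<in>Y <+> Ineq. 0 \<le> u r) \<and> (\<forall>v\<in>{()} <+> Eq <+> Ineq.
      (\<Sum>r\<in>Y <+> Ineq. u r * lagrangian_lp_matrix G H r v) = lagrangian_lp_cost v)"
    and opt: "(\<Sum>v\<in>{()} <+> Eq <+> Ineq. lagrangian_lp_cost v * x v)
      = (\<Sum>r\<in>Y <+> Ineq. u r * lagrangian_lp_rhs f r)"
    using lp_strong_duality[OF fin x0 conjunct1[OF u0] conjunct2[OF u0]] by blast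
  have "x (Inl ()) = (\<Sum>y\<in>Y. u (Inl y) * f y)"
    using opt by (simp add: lagrangian_lp_cost_sum[OF assms(2,3)] lagrangian_lp_rhs_sum[OF assms(1,3)])
  moreover have "(\<forall>k\<in>Ineq. 0 \<le> x (Inr (Inr k)))
      \<and> (\<forall>y\<in>Y. x (Inl ()) \<le> finite_lagrangian Eq Ineq f G H (\<lambda>e. x (Inr (Inl e))) (\<lambda>k. x (Inr (Inr k))) y)"
    using x unfolding feasible_iff .
  moreover have "mixed_feasible Y Eq Ineq G H (\<lambda>y. u (Inl y))"
    using u unfolding dual_feasible_iff by blast
  ultimately show ?thesis
    by (intro exI[of _ "\<lambda>e. x (Inr (Inl e))"] exI[of _ "\<lambda>k. x (Inr (Inr k))"]
        exI[of _ "\<lambda>y. u (Inl y)"]) simp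
qed

section \<open>Weak duality by threshold rounding\<close>

lemma binary_labellings_values: "y \<in> binary_labellings V P \<Longrightarrow> y i p = 0 \<or> y i p = 1"
  unfolding binary_labellings_def by (cases "i \<in> V \<and> p \<in> P") auto

lemma zero_in_binary_labellings: "(\<lambda>i p. 0) \<in> binary_labellings V P"
  unfolding binary_labellings_def by auto

lemma finite_binary_labellings:
  assumes "finite V" "finite P"
  shows "finite (binary_labellings V P)"
proof -
  have "binary_labellings V P \<subseteq> (\<lambda>S i p. of_bool ((i, p) \<in> S)) ` Pow (V \<times> P)"
  proof
    fix y assume y: "y \<in> binary_labellings V P"
    have "y = (\<lambda>i p. of_bool ((i, p) \<in> {(i, p). i \<in> V \<and> p \<in> P \<and> y i p = 1}))"
      using y binary_labellings_values[OF y] unfolding binary_labellings_def by (fastforce simp: fun_eq_iff)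
    then show "y \<in> (\<lambda>S i p. of_bool ((i, p) \<in> S)) ` Pow (V \<times> P)" by blast
  qed
  then show ?thesis using assms by (meson finite_Pow_iff finite_SigmaI finite_imageI finite_subset)
qed

lemma dual_fun_le_lagrangian:
  assumes "finite V" "finite P" "y \<in> binary_labellings V P"
  shows "dual_fun V P E theta1 theta2 M w c K v d lam xi mu
       \<le> lagrangian V P E theta1 theta2 M w c K v d y lam xi mu"
  unfolding dual_fun_def using assms finite_binary_labellings[OF assms(1,2)] by (intro Min_le) auto

lemma le_dual_fun_iff:
  assumes "finite V" "finite P"
  shows "\<gamma> \<le> dual_fun V P E theta1 theta2 M w c K v d lam xi mu \<longleftrightarrow>
     (\<forall>y\<in>binary_labellings V P. \<gamma> \<le> lagrangian V P E theta1 theta2 M w c K v d y lam xi mu)"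
  unfolding dual_fun_def using finite_binary_labellings[OF assms] zero_in_binary_labellings
  by (subst Min_ge_iff) auto

definition constraint_penalty ::
  "'v set \<Rightarrow> 'p set \<Rightarrow> nat \<Rightarrow> (nat \<Rightarrow> 'v \<Rightarrow> 'p \<Rightarrow> real) \<Rightarrow> (nat \<Rightarrow> real)
   \<Rightarrow> nat \<Rightarrow> (nat \<Rightarrow> 'v \<Rightarrow> 'p \<Rightarrow> real) \<Rightarrow> (nat \<Rightarrow> real)
   \<Rightarrow> ('v \<Rightarrow> real) \<Rightarrow> (nat \<Rightarrow> real) \<Rightarrow> (nat \<Rightarrow> real) \<Rightarrow> ('v \<Rightarrow> 'p \<Rightarrow> real) \<Rightarrow> real" where
  "constraint_penalty V P M w c K v d lam xi mu y =
     (\<Sum>i\<in>V. lam i * ((\<Sum>p\<in>P. y i p) - 1))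
   + (\<Sum>m\<in>{1..M}. xi m * ((\<Sum>i\<in>V. \<Sum>p\<in>P. w m i p * y i p) - c m))
   + (\<Sum>k\<in>{1..K}. mu k * ((\<Sum>i\<in>V. \<Sum>p\<in>P. v k i p * y i p) - d k))"

lemma lagrangian_eq_lp_objective_plus_penalty:
  "lagrangian V P E theta1 theta2 M w c K v d y lam xi mu
   = lp_objective V P E theta1 theta2 y (\<lambda>i j p q. y i p * y j q)
     + constraint_penalty V P M w c K v d lam xi mu y"
  unfolding lagrangian_def energy_I_def lp_objective_def constraint_penalty_def
  by (simp add: case_prod_unfold mult.assoc)

lemma constraint_penalty_nonpos:
  assumes "(y1, y2) \<in> lp_feasible V P E M w c K v d" and "\<forall>k\<in>{1..K}. 0 \<le> mu k"
  shows "constraint_penalty V P M w c K v d lam xi mu y1 \<le> 0"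
proof -
  have "(\<Sum>i\<in>V. lam i * ((\<Sum>p\<in>P. y1 i p) - 1)) = 0"
    and "(\<Sum>m\<in>{1..M}. xi m * ((\<Sum>i\<in>V. \<Sum>p\<in>P. w m i p * y1 i p) - c m)) = 0"
    using assms(1) unfolding lp_feasible_def by (auto intro!: sum.neutral)
  moreover have "(\<Sum>k\<in>{1..K}. mu k * ((\<Sum>i\<in>V. \<Sum>p\<in>P. v k i p * y1 i p) - d k)) \<le> 0"
    using assms unfolding lp_feasible_def by (auto intro!: sum_nonpos simp: mult_nonneg_nonpos)
  ultimately show ?thesis unfolding constraint_penalty_def by simp
qed

lemma lp_feasible_pairwise_le_min:
  assumes "(y1, y2) \<in> lp_feasible V P E M w c K v d" "(i, j) \<in> E" "p \<in> P" "q \<in> P"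
  shows "y2 i j p q \<le> min (y1 i p) (y1 j q)"
  using assms unfolding lp_feasible_def by (auto dest!: bspec[where x="(i, j)"])

lemma lp_objective_antimono_pairwise:
  assumes "\<And>i j p q. (i, j) \<in> E \<Longrightarrow> p \<in> P \<Longrightarrow> q \<in> P \<Longrightarrow> theta2 i j p q \<le> 0"
    and "\<And>i j p q. (i, j) \<in> E \<Longrightarrow> p \<in> P \<Longrightarrow> q \<in> P \<Longrightarrow> y2 i j p q \<le> z i j p q"
  shows "lp_objective V P E theta1 theta2 y1 z \<le> lp_objective V P E theta1 theta2 y1 y2"
  unfolding lp_objective_def using assms
  by (auto intro!: sum_mono mult_left_mono_neg simp: case_prod_unfold)

lemma has_integral_threshold:
  fixes a :: real
  assumes "0 \<le> a" "a \<le> 1"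
  shows "((\<lambda>t. of_bool (t < a) :: real) has_integral a) {0..1}"
proof -
  have "((\<lambda>t. 1 :: real) has_integral a) {0..a}"
    using has_integral_const_real[of "1::real" 0 a] assms by simp
  then have "((\<lambda>t. of_bool (t < a) :: real) has_integral a) {0..a}"
    by (rule has_integral_spike[OF negligible_sing[of a], rotated]) auto
  moreover have "((\<lambda>t. of_bool (t < a) :: real) has_integral 0) {a..1}"
    by (rule has_integral_spike[OF negligible_empty _ has_integral_0]) auto
  ultimately show ?thesis using has_integral_combine[OF assms] by fastforce
qed

lemma lp_objective_plus_penalty_has_integral:
  fixes Y :: "real \<Rightarrow> 'v \<Rightarrow> 'p \<Rightarrow> real" and Z :: "real \<Rightarrow> 'v \<Rightarrow> 'v \<Rightarrow> 'p \<Rightarrow> 'p \<Rightarrow> real"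
  assumes "finite V" "finite P" "finite E"
    and "\<And>i p. i \<in> V \<Longrightarrow> p \<in> P \<Longrightarrow> ((\<lambda>t. Y t i p) has_integral y i p) {0..1}"
    and "\<And>i j p q. (i, j) \<in> E \<Longrightarrow> p \<in> P \<Longrightarrow> q \<in> P \<Longrightarrow>
           ((\<lambda>t. Z t i j p q) has_integral z i j p q) {0..1}"
  shows "((\<lambda>t. lp_objective V P E theta1 theta2 (Y t) (Z t)
              + constraint_penalty V P M w c K v d lam xi mu (Y t))
          has_integral lp_objective V P E theta1 theta2 y z
              + constraint_penalty V P M w c K v d lam xi mu y) {0..1}"
proof -
  have const: "((\<lambda>t. a) has_integral a) {0..1::real}" for a :: real
    using has_integral_const_real[of a 0 1] by simp
  show ?thesis
    unfolding lp_objective_def constraint_penalty_def case_prod_unfold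
    using assms
    by (intro has_integral_add has_integral_diff has_integral_sum has_integral_mult_right const
        finite_atLeastAtMost) auto
qed

text \<open>Threshold rounding: cutting a fractional labelling y at a uniformly distributed level t gives
  binary labellings whose Lagrangians average to the relaxed Lagrangian with pairwise
  variables min (y i p) (y j q).\<close>

lemma dual_fun_le_threshold_average:
  assumes "finite V" "finite P" "E \<subseteq> V \<times> V"
    and y: "\<And>i p. i \<in> V \<Longrightarrow> p \<in> P \<Longrightarrow> 0 \<le> y i p \<and> y i p \<le> 1"
  shows "dual_fun V P E theta1 theta2 M w c K v d lam xi mu
       \<le> lp_objective V P E theta1 theta2 y (\<lambda>i j p q. min (y i p) (y j q))
         + constraint_penalty V P M w c K v d lam xi mu y"
proof -
  define Y where "Y = (\<lambda>t i p. of_bool (i \<in> V \<and> p \<in> P \<and> t < y i p) :: real)"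
  have binary: "Y t \<in> binary_labellings V P" for t
    unfolding binary_labellings_def Y_def by auto
  have "((\<lambda>t. Y t i p) has_integral y i p) {0..1}" if "i \<in> V" "p \<in> P" for i p
    using has_integral_threshold[of "y i p"] y[OF that] that unfolding Y_def by simp
  moreover have "((\<lambda>t. Y t i p * Y t j q) has_integral min (y i p) (y j q)) {0..1}"
    if "(i, j) \<in> E" "p \<in> P" "q \<in> P" for i j p q
  proof -
    have ij: "i \<in> V" "j \<in> V" using that assms(3) by auto
    have "(\<lambda>t. Y t i p * Y t j q) = (\<lambda>t. of_bool (t < min (y i p) (y j q)))"
      using ij that unfolding Y_def by auto
    then show ?thesis
      using has_integral_threshold[of "min (y i p) (y j q)"] y[OF ij(1) that(2)] y[OF ij(2) that(3)]
      by (simp add: min_le_iff_disj)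
  qed
  ultimately have integral: "((\<lambda>t. lagrangian V P E theta1 theta2 M w c K v d (Y t) lam xi mu)
      has_integral lp_objective V P E theta1 theta2 y (\<lambda>i j p q. min (y i p) (y j q))
         + constraint_penalty V P M w c K v d lam xi mu y) {0..1}"
    unfolding lagrangian_eq_lp_objective_plus_penalty
    using assms(1,2) finite_subset[OF assms(3)]
    by (intro lp_objective_plus_penalty_has_integral) auto
  have "((\<lambda>t::real. dual_fun V P E theta1 theta2 M w c K v d lam xi mu) has_integral
      dual_fun V P E theta1 theta2 M w c K v d lam xi mu) {0..1}"
    using has_integral_const_real[of "dual_fun V P E theta1 theta2 M w c K v d lam xi mu" 0 1] by simp
  from has_integral_le[OF this integral] show ?thesis
    using dual_fun_le_lagrangian[OF assms(1,2) binary] by blast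
qed

lemma dual_fun_le_lp_objective:
  assumes "finite V" "finite P" "valid_edges V E"
    and "\<And>i j p q. (i, j) \<in> E \<Longrightarrow> p \<in> P \<Longrightarrow> q \<in> P \<Longrightarrow> theta2 i j p q \<le> 0"
    and feasible: "(y1, y2) \<in> lp_feasible V P E M w c K v d" and "\<forall>k\<in>{1..K}. 0 \<le> mu k"
  shows "dual_fun V P E theta1 theta2 M w c K v d lam xi mu \<le> lp_objective V P E theta1 theta2 y1 y2"
proof -
  have "E \<subseteq> V \<times> V" using assms(3) unfolding valid_edges_def by blast
  have "dual_fun V P E theta1 theta2 M w c K v d lam xi mu
      \<le> lp_objective V P E theta1 theta2 y1 (\<lambda>i j p q. min (y1 i p) (y1 j q))
        + constraint_penalty V P M w c K v d lam xi mu y1"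
    using feasible unfolding lp_feasible_def
    by (intro dual_fun_le_threshold_average[OF assms(1,2) \<open>E \<subseteq> V \<times> V\<close>]) auto
  also have "\<dots> \<le> lp_objective V P E theta1 theta2 y1 y2"
  proof -
    have "lp_objective V P E theta1 theta2 y1 (\<lambda>i j p q. min (y1 i p) (y1 j q))
        \<le> lp_objective V P E theta1 theta2 y1 y2"
      by (intro lp_objective_antimono_pairwise[OF assms(4)] lp_feasible_pairwise_le_min[OF feasible])
    then show ?thesis
      using constraint_penalty_nonpos[OF feasible assms(6), of lam xi] by linarith
  qed
  finally show ?thesis .
qed

section \<open>Mixtures of labellings and the linear program\<close>

fun eq_residual ::
  "'v set \<Rightarrow> 'p set \<Rightarrow> (nat \<Rightarrow> 'v \<Rightarrow> 'p \<Rightarrow> real) \<Rightarrow> (nat \<Rightarrow> real)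
   \<Rightarrow> 'v + nat \<Rightarrow> ('v \<Rightarrow> 'p \<Rightarrow> real) \<Rightarrow> real" where
  "eq_residual V P w c (Inl i) y = (\<Sum>p\<in>P. y i p) - 1"
| "eq_residual V P w c (Inr m) y = (\<Sum>i\<in>V. \<Sum>p\<in>P. w m i p * y i p) - c m"

definition ineq_residual ::
  "'v set \<Rightarrow> 'p set \<Rightarrow> (nat \<Rightarrow> 'v \<Rightarrow> 'p \<Rightarrow> real) \<Rightarrow> (nat \<Rightarrow> real)
   \<Rightarrow> nat \<Rightarrow> ('v \<Rightarrow> 'p \<Rightarrow> real) \<Rightarrow> real" where
  "ineq_residual V P v d k y = (\<Sum>i\<in>V. \<Sum>p\<in>P. v k i p * y i p) - d k"

abbreviation feasible_mixture ::
  "'v set \<Rightarrow> 'p set \<Rightarrow> nat \<Rightarrow> (nat \<Rightarrow> 'v \<Rightarrow> 'p \<Rightarrow> real) \<Rightarrow> (nat \<Rightarrow> real)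
   \<Rightarrow> nat \<Rightarrow> (nat \<Rightarrow> 'v \<Rightarrow> 'p \<Rightarrow> real) \<Rightarrow> (nat \<Rightarrow> real) \<Rightarrow> (('v \<Rightarrow> 'p \<Rightarrow> real) \<Rightarrow> real) \<Rightarrow> bool" where
  "feasible_mixture V P M w c K v d \<equiv>
     mixed_feasible (binary_labellings V P) (V <+> {1..M}) {1..K} (eq_residual V P w c) (ineq_residual V P v d)"

lemma sum_mult_expectation:
  "(\<Sum>x\<in>X. a x * (\<Sum>y\<in>Y. \<alpha> y * g y x)) = (\<Sum>y\<in>Y. \<alpha> y * (\<Sum>x\<in>X. a x * g y x :: real))"
  by (simp add: sum_distrib_left sum.swap[of _ Y] mult_ac)

lemma linear_expectation:
  "(\<Sum>i\<in>V. \<Sum>p\<in>P. a i p * (\<Sum>y\<in>Y. \<alpha> y * g y i p))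
   = (\<Sum>y\<in>Y. \<alpha> y * (\<Sum>i\<in>V. \<Sum>p\<in>P. a i p * g y i p :: real))"
proof -
  have "(\<Sum>i\<in>V. \<Sum>p\<in>P. a i p * (\<Sum>y\<in>Y. \<alpha> y * g y i p))
      = (\<Sum>i\<in>V. \<Sum>y\<in>Y. \<alpha> y * (\<Sum>p\<in>P. a i p * g y i p))"
    by (rule sum.cong[OF refl sum_mult_expectation])
  also have "\<dots> = (\<Sum>y\<in>Y. \<alpha> y * (\<Sum>i\<in>V. \<Sum>p\<in>P. a i p * g y i p))"
    by (subst sum.swap) (simp only: sum_distrib_left)
  finally show ?thesis .
qed

lemma linear_expectation_pairwise:
  "(\<Sum>e\<in>E. \<Sum>p\<in>P. \<Sum>q\<in>Q. a e p q * (\<Sum>y\<in>Y. \<alpha> y * g y e p q))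
   = (\<Sum>y\<in>Y. \<alpha> y * (\<Sum>e\<in>E. \<Sum>p\<in>P. \<Sum>q\<in>Q. a e p q * g y e p q :: real))"
proof -
  have "(\<Sum>e\<in>E. \<Sum>p\<in>P. \<Sum>q\<in>Q. a e p q * (\<Sum>y\<in>Y. \<alpha> y * g y e p q))
      = (\<Sum>e\<in>E. \<Sum>y\<in>Y. \<alpha> y * (\<Sum>p\<in>P. \<Sum>q\<in>Q. a e p q * g y e p q))"
    by (rule sum.cong[OF refl linear_expectation])
  also have "\<dots> = (\<Sum>y\<in>Y. \<alpha> y * (\<Sum>e\<in>E. \<Sum>p\<in>P. \<Sum>q\<in>Q. a e p q * g y e p q))"
    by (subst sum.swap) (simp only: sum_distrib_left)
  finally show ?thesis .
qed

lemma lp_objective_expectation: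
  "lp_objective V P E theta1 theta2 (\<lambda>i p. \<Sum>y\<in>Y. \<alpha> y * y i p) (\<lambda>i j p q. \<Sum>y\<in>Y. \<alpha> y * (y i p * y j q))
   = (\<Sum>y\<in>Y. \<alpha> y * energy_I V P E theta1 theta2 y)"
  unfolding lp_objective_def energy_I_def case_prod_unfold
  unfolding linear_expectation_pairwise[where g = "\<lambda>y e p q. y (fst e) p * y (snd e) q"]
  unfolding linear_expectation
  by (simp add: sum.distrib distrib_left mult.assoc)

lemma expectation_minus_const:
  "sum \<alpha> Y = 1 \<Longrightarrow> (\<Sum>y\<in>Y. \<alpha> y * (g y - a)) = (\<Sum>y\<in>Y. \<alpha> y * g y) - (a :: real)"
  by (simp add: right_diff_distrib sum_subtractf flip: sum_distrib_right)

lemma lp_feasible_expectation: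
  assumes "feasible_mixture V P M w c K v d \<alpha>"
  defines "Y \<equiv> binary_labellings V P"
  shows "((\<lambda>i p. \<Sum>y\<in>Y. \<alpha> y * y i p), (\<lambda>i j p q. \<Sum>y\<in>Y. \<alpha> y * (y i p * y j q)))
         \<in> lp_feasible V P E M w c K v d"
proof -
  have \<alpha>: "\<And>y. y \<in> Y \<Longrightarrow> 0 \<le> \<alpha> y" "sum \<alpha> Y = 1"
    and eqs: "\<And>e. e \<in> V <+> {1..M} \<Longrightarrow> (\<Sum>y\<in>Y. \<alpha> y * eq_residual V P w c e y) = 0"
    and ineqs: "\<And>k. k \<in> {1..K} \<Longrightarrow> (\<Sum>y\<in>Y. \<alpha> y * ineq_residual V P v d k y) \<le> 0"
    using assms unfolding mixed_feasible_def Y_def by auto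
  have y01: "0 \<le> y i p" "y i p \<le> 1" if "y \<in> Y" for y i p
    using binary_labellings_values[of y V P i p] that unfolding Y_def by auto
  define y1 where "y1 = (\<lambda>i p. \<Sum>y\<in>Y. \<alpha> y * y i p)"
  define y2 where "y2 = (\<lambda>i j p q. \<Sum>y\<in>Y. \<alpha> y * (y i p * y j q))"
  have y1: "0 \<le> y1 i p \<and> y1 i p \<le> 1" for i p
  proof
    show "0 \<le> y1 i p" unfolding y1_def using \<alpha> y01 by (intro sum_nonneg) auto
    have "y1 i p \<le> sum \<alpha> Y" unfolding y1_def using \<alpha> y01 by (intro sum_mono) (simp add: mult_left_le)
    then show "y1 i p \<le> 1" using \<alpha> by simp
  qed
  have y2: "0 \<le> y2 i j p q \<and> y2 i j p q \<le> 1 \<and> y2 i j p q \<le> y1 i p \<and> y2 i j p q \<le> y1 j q"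
    for i j p q
  proof (intro conjI)
    show "0 \<le> y2 i j p q" unfolding y2_def using \<alpha> y01 by (intro sum_nonneg) auto
    show "y2 i j p q \<le> y1 i p" unfolding y2_def y1_def using \<alpha> y01
      by (intro sum_mono mult_left_mono) (auto simp: mult_left_le)
    show "y2 i j p q \<le> y1 j q" unfolding y2_def y1_def using \<alpha> y01
      by (intro sum_mono mult_left_mono) (auto intro: mult_left_le_one_le)
    then show "y2 i j p q \<le> 1" using y1[of j q] by simp
  qed
  have "(\<Sum>p\<in>P. y1 i p) = 1" if "i \<in> V" for i
  proof -
    have "(\<Sum>p\<in>P. y1 i p) = (\<Sum>y\<in>Y. \<alpha> y * (\<Sum>p\<in>P. y i p))"
      unfolding y1_def by (subst sum.swap) (simp only: sum_distrib_left)
    then show ?thesis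
      using eqs[OF InlI[OF that]] by (simp add: expectation_minus_const[OF \<alpha>(2)])
  qed
  moreover have "(\<Sum>i\<in>V. \<Sum>p\<in>P. w m i p * y1 i p) = c m" if "m \<in> {1..M}" for m
    using eqs[OF InrI[OF that]]
    by (simp add: y1_def linear_expectation expectation_minus_const[OF \<alpha>(2)])
  moreover have "(\<Sum>i\<in>V. \<Sum>p\<in>P. v k i p * y1 i p) \<le> d k" if "k \<in> {1..K}" for k
    using ineqs[OF that]
    by (simp add: y1_def ineq_residual_def linear_expectation expectation_minus_const[OF \<alpha>(2)])
  ultimately show ?thesis
    using y1 y2 unfolding lp_feasible_def y1_def[symmetric] y2_def[symmetric] by auto
qed

lemma finite_lagrangian_eq_lagrangian:
  assumes "finite V"
  shows "finite_lagrangian (V <+> {1..M}) {1..K} (energy_I V P E theta1 theta2)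
           (eq_residual V P w c) (ineq_residual V P v d) l mu y
       = lagrangian V P E theta1 theta2 M w c K v d y (\<lambda>i. l (Inl i)) (\<lambda>m. l (Inr m)) mu"
  using assms unfolding lagrangian_def finite_lagrangian_def ineq_residual_def
  by (simp add: sum.Plus)

lemma lp_feasible_nonempty_if_feasible_mixture:
  assumes "feasible_mixture V P M w c K v d \<alpha>"
  shows "lp_feasible V P E M w c K v d \<noteq> {}"
  using lp_feasible_expectation[OF assms] by blast

lemma dual_fun_unbounded_if_lp_infeasible:
  assumes "finite V" "finite P"
    and "\<nexists>\<alpha>. feasible_mixture V P M w c K v d \<alpha>"
  shows "\<exists>lam xi mu. (\<forall>k\<in>{1..K}. 0 \<le> mu k)
           \<and> \<gamma> \<le> dual_fun V P E theta1 theta2 M w c K v d lam xi mu"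
proof -
  obtain l mu where "\<forall>k\<in>{1..K}. 0 \<le> mu k"
    and "\<forall>y\<in>binary_labellings V P. \<gamma> \<le> finite_lagrangian (V <+> {1..M}) {1..K}
           (energy_I V P E theta1 theta2) (eq_residual V P w c) (ineq_residual V P v d) l mu y"
    using lagrangian_dual_unbounded[OF finite_binary_labellings[OF assms(1,2)]
        finite_Plus[OF assms(1) finite_atLeastAtMost] finite_atLeastAtMost assms(3),
        of \<gamma> "energy_I V P E theta1 theta2"]
    by blast
  then show ?thesis
    unfolding le_dual_fun_iff[OF assms(1,2)] finite_lagrangian_eq_lagrangian[OF assms(1)]
    by (intro exI[of _ "\<lambda>i. l (Inl i)"] exI[of _ "\<lambda>m. l (Inr m)"] exI[of _ mu]) simp
qed

lemma feasible_mixture_if_lp_feasible: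
  assumes "finite V" "finite P" "valid_edges V E"
    and "(y1, y2) \<in> lp_feasible V P E M w c K v d"
  shows "\<exists>\<alpha>. feasible_mixture V P M w c K v d \<alpha>"
proof (rule ccontr)
  \<comment> \<open>with zero costs weak duality bounds the dual function by 0, so it cannot be unbounded\<close>
  let ?D = "dual_fun V P E (\<lambda>_ _. 0) (\<lambda>_ _ _ _. 0) M w c K v d"
  assume "\<not> ?thesis"
  then obtain lam xi mu where mu: "\<forall>k\<in>{1..K}. 0 \<le> mu k" and "1 \<le> ?D lam xi mu"
    using dual_fun_unbounded_if_lp_infeasible[OF assms(1,2)] by blast
  moreover have "?D lam xi mu \<le> lp_objective V P E (\<lambda>_ _. 0) (\<lambda>_ _ _ _. 0) y1 y2"
    using dual_fun_le_lp_objective[OF assms(1-3) _ assms(4) mu] by simp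
  ultimately show False by (simp add: lp_objective_def)
qed

lemma dual_fun_attains_lp_objective:
  assumes "finite V" "finite P" "valid_edges V E"
    and "\<And>i j p q. (i, j) \<in> E \<Longrightarrow> p \<in> P \<Longrightarrow> q \<in> P \<Longrightarrow> theta2 i j p q \<le> 0"
    and "feasible_mixture V P M w c K v d \<alpha>0"
  shows "\<exists>lam xi mu. (\<forall>k\<in>{1..K}. 0 \<le> mu k) \<and> (\<exists>(y1, y2) \<in> lp_feasible V P E M w c K v d.
           dual_fun V P E theta1 theta2 M w c K v d lam xi mu = lp_objective V P E theta1 theta2 y1 y2)"
proof -
  let ?Y = "binary_labellings V P"
  obtain l mu \<alpha> where mu: "\<forall>k\<in>{1..K}. 0 \<le> mu k"
    and \<alpha>: "feasible_mixture V P M w c K v d \<alpha>"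
    and le: "\<forall>y\<in>?Y. (\<Sum>y'\<in>?Y. \<alpha> y' * energy_I V P E theta1 theta2 y')
       \<le> finite_lagrangian (V <+> {1..M}) {1..K} (energy_I V P E theta1 theta2)
            (eq_residual V P w c) (ineq_residual V P v d) l mu y"
    using lagrangian_strong_duality[OF finite_binary_labellings[OF assms(1,2)]
        finite_Plus[OF assms(1) finite_atLeastAtMost] finite_atLeastAtMost assms(5),
        of "energy_I V P E theta1 theta2"]
    by blast
  define y1 where "y1 = (\<lambda>i p. \<Sum>y\<in>?Y. \<alpha> y * y i p)"
  define y2 where "y2 = (\<lambda>i j p q. \<Sum>y\<in>?Y. \<alpha> y * (y i p * y j q))"
  have feasible: "(y1, y2) \<in> lp_feasible V P E M w c K v d"
    unfolding y1_def y2_def by (rule lp_feasible_expectation[OF \<alpha>])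
  let ?D = "dual_fun V P E theta1 theta2 M w c K v d (\<lambda>i. l (Inl i)) (\<lambda>m. l (Inr m)) mu"
  have "lp_objective V P E theta1 theta2 y1 y2 \<le> ?D"
    using le unfolding y1_def y2_def lp_objective_expectation le_dual_fun_iff[OF assms(1,2)]
      finite_lagrangian_eq_lagrangian[OF assms(1)] .
  moreover have "?D \<le> lp_objective V P E theta1 theta2 y1 y2"
    using dual_fun_le_lp_objective[OF assms(1-4) feasible mu] .
  ultimately have "?D = lp_objective V P E theta1 theta2 y1 y2" by (rule antisym[rotated])
  then show ?thesis
    using mu feasible
    by (intro exI[of _ "\<lambda>i. l (Inl i)"] exI[of _ "\<lambda>m. l (Inr m)"] exI[of _ mu] conjI
        bexI[of _ "(y1, y2)"]) simp_all
qed

lemma SUP_eq_INF_if_attained: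
  fixes F :: "'a \<Rightarrow> 'c :: complete_linorder"
  assumes "\<And>x y. x \<in> A \<Longrightarrow> y \<in> B \<Longrightarrow> F x \<le> G y"
    and "a \<in> A" "b \<in> B" "F a = G b"
  shows "(SUP x\<in>A. F x) = (INF y\<in>B. G y)"
proof (rule antisym)
  have "(SUP x\<in>A. F x) \<le> G b" using assms(1,3) by (intro SUP_least) auto
  also have "\<dots> = F a" using assms(4) ..
  also have "\<dots> \<le> (INF y\<in>B. G y)" using assms(1,2) by (intro INF_greatest) auto
  finally show "(SUP x\<in>A. F x) \<le> (INF y\<in>B. G y)" .
  have "(INF y\<in>B. G y) \<le> G b" using assms(3) by (rule INF_lower)
  also have "\<dots> = F a" using assms(4) ..
  also have "\<dots> \<le> (SUP x\<in>A. F x)" using assms(2) by (rule SUP_upper)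
  finally show "(INF y\<in>B. G y) \<le> (SUP x\<in>A. F x)" .
qed

lemma SUP_eq_infinity_if_unbounded:
  assumes "\<And>\<gamma>::real. \<exists>a\<in>A. ereal \<gamma> \<le> F a"
  shows "(SUP a\<in>A. F a) = \<infinity>"
proof (rule ereal_top)
  fix \<gamma> :: real
  from assms obtain a where "a \<in> A" "ereal \<gamma> \<le> F a" by blast
  then show "ereal \<gamma> \<le> (SUP a\<in>A. F a)" by (blast intro: SUP_upper2)
qed

theorem theorem7:
  fixes V :: "'v set" and P :: "'p set" and E :: "('v \<times> 'v) set"
    and theta1 :: "'v \<Rightarrow> 'p \<Rightarrow> real"
    and theta2 :: "'v \<Rightarrow> 'v \<Rightarrow> 'p \<Rightarrow> 'p \<Rightarrow> real"
    and M K :: nat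
    and w v :: "nat \<Rightarrow> 'v \<Rightarrow> 'p \<Rightarrow> real" and c d :: "nat \<Rightarrow> real"
  assumes "finite V" and "finite P" and "valid_edges V E"
    and "\<And>i j p q. (i,j) \<in> E \<Longrightarrow> p \<in> P \<Longrightarrow> q \<in> P \<Longrightarrow> theta2 i j p q \<le> 0"
  shows "(SUP (lam, xi, mu) \<in> {(lam, xi, mu). \<forall>k\<in>{1..K}. mu k \<ge> 0}.
            ereal (dual_fun V P E theta1 theta2 M w c K v d lam xi mu))
       = (INF (y1, y2) \<in> lp_feasible V P E M w c K v d.
            ereal (lp_objective V P E theta1 theta2 y1 y2))
     \<and> (lp_feasible V P E M w c K v d \<noteq> {} \<longrightarrow>
          (\<exists>lam xi mu. (\<forall>k\<in>{1..K}. mu k \<ge> 0) \<and>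
             (\<exists>(y1, y2) \<in> lp_feasible V P E M w c K v d.
                dual_fun V P E theta1 theta2 M w c K v d lam xi mu
                = lp_objective V P E theta1 theta2 y1 y2)))"
  (is "?sup = ?inf \<and> (?F \<noteq> {} \<longrightarrow> ?attained)")
proof (cases "?F = {}")
  case True
  then have no_mixed: "\<nexists>\<alpha>. feasible_mixture V P M w c K v d \<alpha>"
    using lp_feasible_nonempty_if_feasible_mixture by blast
  have "?sup = \<infinity>"
  proof (rule SUP_eq_infinity_if_unbounded)
    fix \<gamma> :: real
    obtain lam xi mu where "\<forall>k\<in>{1..K}. 0 \<le> mu k"
      and "\<gamma> \<le> dual_fun V P E theta1 theta2 M w c K v d lam xi mu"
      using dual_fun_unbounded_if_lp_infeasible[OF assms(1,2) no_mixed] by blast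
    then show "\<exists>a\<in>{(lam, xi, mu). \<forall>k\<in>{1..K}. 0 \<le> mu k}.
        ereal \<gamma> \<le> (case a of (lam, xi, mu) \<Rightarrow> ereal (dual_fun V P E theta1 theta2 M w c K v d lam xi mu))"
      by (intro bexI[of _ "(lam, xi, mu)"]) simp_all
  qed
  then show ?thesis using True by (simp add: top_ereal_def)
next
  case False
  then obtain y1 y2 where "(y1, y2) \<in> ?F" by auto
  then obtain \<alpha> where "feasible_mixture V P M w c K v d \<alpha>"
    using feasible_mixture_if_lp_feasible[OF assms(1-3)] by blast
  then obtain lam xi mu y1' y2' where mu: "\<forall>k\<in>{1..K}. 0 \<le> mu k" and opt: "(y1', y2') \<in> ?F"
    and eq: "dual_fun V P E theta1 theta2 M w c K v d lam xi mu = lp_objective V P E theta1 theta2 y1' y2'"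
    using dual_fun_attains_lp_objective[where ?theta1.0 = theta1 and ?theta2.0 = theta2, OF assms] by blast
  have "?sup = ?inf"
    using mu opt eq dual_fun_le_lp_objective[where ?theta1.0 = theta1 and ?theta2.0 = theta2, OF assms]
    by (intro SUP_eq_INF_if_attained[where a = "(lam, xi, mu)" and b = "(y1', y2')"])
      (auto split: prod.splits)
  then show ?thesis using mu opt eq by blast
qed

end
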